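(* In the variety $\mathbf{P}_3$ of $3$-dimensional complex Poisson algebras: (1) the Zariski closure of $\bigcup_{\alpha\in\mathbb{C}}O(\mathcal{P}_{3,4}^{\alpha})$ contains the orbit closures of $\mathcal{P}_{3,3}$, $\mathcal{P}_{3,2}$ and $\mathcal{P}_{3,1}$; (2) the Zariski closure of $\bigcup_{\alpha\in\mathbb{C}}O(\mathcal{P}_{3,16}^{\alpha})$ contains the orbit closures of $\mathcal{P}_{3,15}$, $\mathcal{P}_{3,13}$, $\mathcal{P}_{3,2}$ and $\mathcal{P}_{3,1}$. Here (basis $e_1,e_2,e_3$, only nonzero products listed up to commutativity/anticommutativity): $\mathcal{P}_{3,1}$: zero; $\mathcal{P}_{3,2}$: $\{e_1,e_2\}=e_3$; $\mathcal{P}_{3,3}$: $\{e_1,e_2\}=e_2,\{e_1,e_3\}=e_2+e_3$; $\mathcal{P}_{3,4}^{\alpha}$: $\{e_1,e_2\}=e_2,\{e_1,e_3\}=\alpha e_3$; $\mathcal{P}_{3,13}$: $e_1\cdot e_1=e_2$; $\mathcal{P}_{3,15}$: $e_1\cdot e_1=e_2,\{e_1,e_3\}=e_2$; $\mathcal{P}_{3,16}^{\alpha}$: $e_1\cdot e_2=e_3,\{e_1,e_2\}=\alpha e_3$.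
   Context: Fix a $3$-dimensional complex vector space $V$; pairs $(\mu,\mu')$ of bilinear maps on $V$ are identified with their structure constants in $\mathbb{C}^{54}$. $\mathbf{P}_3$ is the affine variety of pairs defining Poisson algebras ($\mu$ commutative associative, $\mu'$ Lie, Leibniz identity $\mu'(\mu(x,y),z)=\mu(\mu'(x,z),y)+\mu(x,\mu'(y,z))$). $\mathrm{GL}(V)$ acts by $(g*(\mu,\mu'))(x,y)=(g\mu(g^{-1}x,g^{-1}y),g\mu'(g^{-1}x,g^{-1}y))$, and $O(\mathcal{P})$ denotes the orbit of any structure representing $\mathcal{P}$. Closures are in the Zariski topology. *)

theory Defs
  imports "HOL-Analysis.Analysis"
begin

datatype idx = E1 | E2 | E3

lemma UNIV_idx: "(UNIV :: idx set) = {E1, E2, E3}"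
  by (auto intro: idx.exhaust)

instance idx :: finite
  by standard (simp add: UNIV_idx)

text \<open>Structure constants of a bilinear map mu on V:
  c i j k = coefficient of e_k in mu(e_i, e_j).  A pair (mu, mu') is a point of C^54.\<close>
type_synonym sconst = "idx \<Rightarrow> idx \<Rightarrow> idx \<Rightarrow> complex"
type_synonym spair = "sconst \<times> sconst"

definition bil :: "sconst \<Rightarrow> complex^idx \<Rightarrow> complex^idx \<Rightarrow> complex^idx" where
  "bil c x y = (\<chi> k. \<Sum>i\<in>UNIV. \<Sum>j\<in>UNIV. x$i * y$j * c i j k)"

definition basis_vec :: "idx \<Rightarrow> complex^idx" where
  "basis_vec i = (\<chi> j. if j = i then 1 else 0)"

definition act :: "complex^idx^idx \<Rightarrow> sconst \<Rightarrow> sconst" where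
  "act g c = (\<lambda>i j k. (g *v bil c (matrix_inv g *v basis_vec i) (matrix_inv g *v basis_vec j)) $ k)"

definition act_pair :: "complex^idx^idx \<Rightarrow> spair \<Rightarrow> spair" where
  "act_pair g p = (act g (fst p), act g (snd p))"

definition orbit :: "spair \<Rightarrow> spair set" where
  "orbit p = {act_pair g p | g. invertible g}"

inductive_set poly_fun :: "(spair \<Rightarrow> complex) set" where
  const: "(\<lambda>_. a) \<in> poly_fun"
| coord1: "(\<lambda>p. fst p i j k) \<in> poly_fun"
| coord2: "(\<lambda>p. snd p i j k) \<in> poly_fun"
| add: "f \<in> poly_fun \<Longrightarrow> g \<in> poly_fun \<Longrightarrow> (\<lambda>p. f p + g p) \<in> poly_fun"
| mult: "f \<in> poly_fun \<Longrightarrow> g \<in> poly_fun \<Longrightarrow> (\<lambda>p. f p * g p) \<in> poly_fun"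

definition zariski_closed :: "spair set \<Rightarrow> bool" where
  "zariski_closed C \<longleftrightarrow> (\<exists>F \<subseteq> poly_fun. C = {p. \<forall>f\<in>F. f p = 0})"

definition zariski_closure :: "spair set \<Rightarrow> spair set" where
  "zariski_closure S = \<Inter>{C. zariski_closed C \<and> S \<subseteq> C}"

text \<open>An entry (a,b,k,c) means: the product of e_a and e_b has e_k-coefficient c.
  comm_sc: commutative extension; lie_sc: anticommutative extension.\<close>
definition comm_sc :: "(idx \<times> idx \<times> idx \<times> complex) list \<Rightarrow> sconst" where
  "comm_sc l i j k = sum_list [c. (a,b,d,c) \<leftarrow> l, d = k \<and> ((a = i \<and> b = j) \<or> (a = j \<and> b = i))]"

definition lie_sc :: "(idx \<times> idx \<times> idx \<times> complex) list \<Rightarrow> sconst" where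
  "lie_sc l i j k = sum_list [c. (a,b,d,c) \<leftarrow> l, a = i \<and> b = j \<and> d = k]
                  - sum_list [c. (a,b,d,c) \<leftarrow> l, a = j \<and> b = i \<and> d = k]"

definition P3_1 :: spair where "P3_1 = (comm_sc [], lie_sc [])"
definition P3_2 :: spair where "P3_2 = (comm_sc [], lie_sc [(E1,E2,E3,1)])"
definition P3_3 :: spair where
  "P3_3 = (comm_sc [], lie_sc [(E1,E2,E2,1), (E1,E3,E2,1), (E1,E3,E3,1)])"
definition P3_4 :: "complex \<Rightarrow> spair" where
  "P3_4 \<alpha> = (comm_sc [], lie_sc [(E1,E2,E2,1), (E1,E3,E3,\<alpha>)])"
definition P3_13 :: spair where "P3_13 = (comm_sc [(E1,E1,E2,1)], lie_sc [])"
definition P3_15 :: spair where "P3_15 = (comm_sc [(E1,E1,E2,1)], lie_sc [(E1,E3,E2,1)])"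
definition P3_16 :: "complex \<Rightarrow> spair" where
  "P3_16 \<alpha> = (comm_sc [(E1,E2,E3,1)], lie_sc [(E1,E2,E3,\<alpha>)])"

end

theory Submission
  imports Defs
begin

(* Each inclusion is a degeneration: a basis change depending on a parameter t \<noteq> 0 carries a
   member of the family to a structure q t whose constants are polynomial in t and whose value at
   t = 0 is the target algebra. Polynomials are continuous, so Zariski-closed sets are closed in the
   Euclidean topology and contain the limit q 0. The union of the orbits of a family is GL-stable,
   so the same limit argument for g * q t puts the whole orbit of q 0 into the Zariski closure.
   The zero algebra is reached from any structure p by scaling the basis by t, which gives t p. *)

lemma matrix_inv_unique:
  fixes A B :: "'a::semiring_1^'n^'n"
  assumes "A ** B = mat 1" "B ** A = mat 1"
  shows "matrix_inv A = B"
proof -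
  have inv: "A ** matrix_inv A = mat 1 \<and> matrix_inv A ** A = mat 1"
    unfolding matrix_inv_def by (rule someI[of _ B]) (use assms in blast)
  have "matrix_inv A = matrix_inv A ** (A ** B)"
    using assms by simp
  also have "\<dots> = B"
    using inv by (simp add: matrix_mul_assoc)
  finally show ?thesis .
qed

lemma matrix_inv_mult:
  fixes A B :: "'a::semiring_1^'n^'n"
  assumes "invertible A" "invertible B"
  shows "matrix_inv (A ** B) = matrix_inv B ** matrix_inv A"
proof -
  obtain A' B' where A': "A ** A' = mat 1" "A' ** A = mat 1"
    and B': "B ** B' = mat 1" "B' ** B = mat 1"
    using assms unfolding invertible_def by blast
  have "A ** B ** (B' ** A') = A ** (B ** B') ** A'" "B' ** A' ** (A ** B) = B' ** (A' ** A) ** B"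
    by (simp_all add: matrix_mul_assoc)
  then have "matrix_inv (A ** B) = B' ** A'"
    using A' B' by (intro matrix_inv_unique) simp_all
  with A' B' show ?thesis
    by (simp add: matrix_inv_unique)
qed

lemma bil_compose_output:
  "bil (\<lambda>i j k. (G *v v i j) $ k) x y = G *v bil (\<lambda>i j k. v i j $ k) x y"
  unfolding vec_eq_iff
  by (simp add: bil_def matrix_vector_mult_def UNIV_idx algebra_simps)

lemma bil_compose_inputs:
  "bil (\<lambda>i j k. bil c (H *v basis_vec i) (H *v basis_vec j) $ k) x y = bil c (H *v x) (H *v y)"
  unfolding vec_eq_iff
  by (simp add: bil_def matrix_vector_mult_def basis_vec_def if_distrib cong: if_cong)
     (simp add: UNIV_idx algebra_simps)

(* If G is the inverse of H, then rebase G H c are the structure constants of c with respect to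
   the basis formed by the columns of H. *)
definition rebase :: "complex^idx^idx \<Rightarrow> complex^idx^idx \<Rightarrow> sconst \<Rightarrow> sconst" where
  "rebase G H c = (\<lambda>i j k. (G *v bil c (H *v basis_vec i) (H *v basis_vec j)) $ k)"

lemma bil_rebase: "bil (rebase G H c) x y = G *v bil c (H *v x) (H *v y)"
  unfolding rebase_def bil_compose_output bil_compose_inputs ..

lemma rebase_rebase: "rebase G H (rebase G' H' c) = rebase (G ** G') (H' ** H) c"
  unfolding rebase_def[of G H] bil_rebase by (simp add: rebase_def matrix_vector_mul_assoc)

lemma rebase_eq:
  "rebase G H c i j k = (\<Sum>l\<in>UNIV. G$k$l * (\<Sum>a\<in>UNIV. \<Sum>b\<in>UNIV. H$a$i * H$b$j * c a b l))"
  unfolding rebase_def bil_def matrix_vector_mult_def basis_vec_def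
  by (simp add: if_distrib cong: if_cong)

lemma act_eq_rebase: "act g = rebase g (matrix_inv g)"
  by (simp add: fun_eq_iff act_def rebase_def)

lemma act_pair_eq: "act_pair g = map_prod (act g) (act g)"
  by (simp add: fun_eq_iff act_pair_def)

lemma act_pair_act_pair:
  assumes "invertible g" "invertible h"
  shows "act_pair g (act_pair h p) = act_pair (g ** h) p"
  by (simp add: act_pair_def act_eq_rebase rebase_rebase matrix_inv_mult[OF assms])

lemma act_pair_orbit:
  assumes "invertible g" "p \<in> orbit q"
  shows "act_pair g p \<in> orbit q"
  using assms act_pair_act_pair invertible_mult unfolding orbit_def by blast

lemma zariski_closure_eq:
  "zariski_closure S = {p. \<forall>f\<in>poly_fun. (\<forall>s\<in>S. f s = 0) \<longrightarrow> f p = 0}"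
proof (intro equalityI subsetI CollectI ballI impI)
  fix p f assume p: "p \<in> zariski_closure S" and f: "f \<in> poly_fun" "\<forall>s\<in>S. f s = 0"
  then have "zariski_closed {p. f p = 0}"
    unfolding zariski_closed_def by (intro exI[of _ "{f}"]) auto
  with f p show "f p = 0"
    unfolding zariski_closure_def by blast
next
  fix p assume "p \<in> {p. \<forall>f\<in>poly_fun. (\<forall>s\<in>S. f s = 0) \<longrightarrow> f p = 0}"
  then show "p \<in> zariski_closure S"
    unfolding zariski_closure_def zariski_closed_def by blast
qed

lemma zariski_closed_zariski_closure: "zariski_closed (zariski_closure S)"
  unfolding zariski_closed_def zariski_closure_eq
  by (intro exI[of _ "{f \<in> poly_fun. \<forall>s\<in>S. f s = 0}"]) auto

lemma zariski_closure_minimal: "S \<subseteq> C \<Longrightarrow> zariski_closed C \<Longrightarrow> zariski_closure S \<subseteq> C"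
  unfolding zariski_closure_def by blast

lemma zariski_closure_mono: "S \<subseteq> T \<Longrightarrow> zariski_closure S \<subseteq> zariski_closure T"
  unfolding zariski_closure_def by blast

lemma continuous_on_sconst_entry: "continuous_on UNIV (\<lambda>c::sconst. c i j k)"
proof -
  have "continuous_on UNIV (\<lambda>c::sconst. c i j)"
    by (rule continuous_on_product_then_coordinatewise[OF continuous_on_product_coordinates])
  then show ?thesis
    by (rule continuous_on_product_then_coordinatewise)
qed

lemma continuous_on_poly_fun: "f \<in> poly_fun \<Longrightarrow> continuous_on UNIV f"
proof (induction rule: poly_fun.induct)
  case (coord1 i j k)
  show ?case
    by (rule continuous_on_compose2[OF continuous_on_sconst_entry continuous_on_fst[OF continuous_on_id]])
      auto
next
  case (coord2 i j k)
  show ?case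
    by (rule continuous_on_compose2[OF continuous_on_sconst_entry continuous_on_snd[OF continuous_on_id]])
      auto
qed (simp_all add: continuous_intros)

lemma zariski_closed_imp_closed: "zariski_closed C \<Longrightarrow> closed C"
proof -
  assume "zariski_closed C"
  then obtain F where "F \<subseteq> poly_fun" "C = (\<Inter>f\<in>F. {p. f p = 0})"
    unfolding zariski_closed_def by blast
  then show "closed C"
    by (auto intro!: closed_INT closed_Collect_eq[OF continuous_on_poly_fun continuous_on_const])
qed

lemma closure_subset_zariski_closure: "closure S \<subseteq> zariski_closure S"
  unfolding zariski_closure_def
  by (intro Inter_greatest closure_minimal) (auto simp: zariski_closed_imp_closed)

lemma continuous_on_rebase: "continuous_on UNIV (rebase G H)"
  unfolding rebase_def bil_def matrix_vector_mult_def vec_lambda_beta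
  by (intro continuous_on_coordinatewise_then_product continuous_on_sum continuous_on_mult
      continuous_on_const continuous_on_sconst_entry)

lemma continuous_on_act_pair: "continuous_on UNIV (act_pair g)"
  unfolding act_pair_def act_eq_rebase
  by (intro continuous_on_Pair; rule continuous_on_compose2[OF continuous_on_rebase])
     (auto intro: continuous_on_fst continuous_on_snd continuous_on_id)

lemma zariski_closure_orbit_limit:
  fixes q :: "complex \<Rightarrow> spair"
  assumes invariant: "\<And>g p. invertible g \<Longrightarrow> p \<in> S \<Longrightarrow> act_pair g p \<in> S"
    and cont: "isCont q 0" and curve: "\<And>t. t \<noteq> 0 \<Longrightarrow> q t \<in> S"
  shows "zariski_closure (orbit (q 0)) \<subseteq> zariski_closure S"
proof (rule zariski_closure_minimal[OF _ zariski_closed_zariski_closure], rule subsetI)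
  fix p assume "p \<in> orbit (q 0)"
  then obtain g where g: "invertible g" "p = act_pair g (q 0)"
    unfolding orbit_def by blast
  have "isCont (act_pair g) (q 0)"
    by (meson UNIV_I continuous_on_act_pair continuous_on_eq_continuous_at open_UNIV)
  then have "((\<lambda>t. act_pair g (q t)) \<longlongrightarrow> p) (at 0)"
    unfolding g(2) by (rule isCont_tendsto_compose) (use cont in \<open>simp add: isCont_def\<close>)
  moreover have "\<forall>\<^sub>F t in at 0. act_pair g (q t) \<in> closure S"
    using invariant[OF g(1) curve] closure_subset
    by (auto simp: eventually_at_filter intro!: always_eventually)
  ultimately have "p \<in> closure S"
    by (intro Lim_in_closed_set[of "closure S"]) auto
  then show "p \<in> zariski_closure S"
    using closure_subset_zariski_closure by blast
qed

lemma zariski_closure_orbit_subset_family: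
  fixes G H :: "complex \<Rightarrow> complex^idx^idx" and Q :: "complex \<Rightarrow> spair"
  assumes inverse: "\<And>t. t \<noteq> 0 \<Longrightarrow> G t ** H t = mat 1 \<and> H t ** G t = mat 1"
    and rebased: "\<And>t. t \<noteq> 0 \<Longrightarrow> map_prod (rebase (G t) (H t)) (rebase (G t) (H t)) (Q (\<alpha> t)) = q t"
    and "continuous_on UNIV q" and "q 0 = P"
  shows "zariski_closure (orbit P) \<subseteq> zariski_closure (\<Union>\<alpha>. orbit (Q \<alpha>))"
proof -
  have "zariski_closure (orbit (q 0)) \<subseteq> zariski_closure (\<Union>\<alpha>. orbit (Q \<alpha>))"
  proof (rule zariski_closure_orbit_limit)
    show "act_pair g p \<in> (\<Union>\<alpha>. orbit (Q \<alpha>))" if "invertible g" "p \<in> (\<Union>\<alpha>. orbit (Q \<alpha>))" for g p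
      using that act_pair_orbit by blast
    show "isCont q 0"
      by (meson UNIV_I \<open>continuous_on UNIV q\<close> continuous_on_eq_continuous_at open_UNIV)
    show "q t \<in> (\<Union>\<alpha>. orbit (Q \<alpha>))" if "t \<noteq> 0" for t
    proof -
      have inv: "G t ** H t = mat 1" "H t ** G t = mat 1"
        using inverse[OF that] by auto
      then have "invertible (G t)"
        unfolding invertible_def by blast
      moreover have "q t = act_pair (G t) (Q (\<alpha> t))"
        using rebased[OF that] by (simp add: act_pair_eq act_eq_rebase matrix_inv_unique[OF inv])
      ultimately show ?thesis
        unfolding orbit_def by blast
    qed
  qed
  then show ?thesis
    using \<open>q 0 = P\<close> by simp
qed

lemma comm_sc_Nil: "comm_sc [] = (\<lambda>i j k. 0)"
  by (simp add: comm_sc_def fun_eq_iff)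

lemma lie_sc_Nil: "lie_sc [] = (\<lambda>i j k. 0)"
  by (simp add: lie_sc_def fun_eq_iff)

lemma all_idx: "(\<forall>i. P i) \<longleftrightarrow> P E1 \<and> P E2 \<and> P E3"
  by (metis idx.exhaust)

lemma mat_mult_mat: "mat a ** mat b = (mat (a * b) :: complex^idx^idx)"
  by (simp add: vec_eq_iff all_idx mat_def matrix_matrix_mult_def UNIV_idx)

lemma rebase_mat: "rebase (mat a) (mat b) c = (\<lambda>i j k. a * b * b * c i j k)"
  by (simp add: fun_eq_iff all_idx rebase_eq mat_def UNIV_idx)

lemma zariski_closure_orbit_zero: "zariski_closure (orbit P3_1) \<subseteq> zariski_closure (orbit p)"
proof -
  have "zariski_closure (orbit P3_1) \<subseteq> zariski_closure (\<Union>\<alpha>::complex. orbit p)"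
    by (rule zariski_closure_orbit_subset_family[where G = "\<lambda>t. mat (1/t)" and H = "\<lambda>t. mat t"
          and q = "\<lambda>t. (\<lambda>i j k. t * fst p i j k, \<lambda>i j k. t * snd p i j k)"])
       (auto simp: mat_mult_mat rebase_mat map_prod_def split_beta P3_1_def comm_sc_Nil lie_sc_Nil
          intro!: continuous_intros continuous_on_sconst_entry)
  then show ?thesis
    by simp
qed

(* Stated with of_bool rather than if, so that coefficients depending on a parameter stay accessible
   to continuous_intros. *)
lemma comm_sc_Cons:
  "comm_sc ((a, b, d, c) # l) i j k =
     of_bool (d = k \<and> (a = i \<and> b = j \<or> a = j \<and> b = i)) * c + comm_sc l i j k"
  by (simp add: comm_sc_def)

lemma lie_sc_Cons:
  "lie_sc ((a, b, d, c) # l) i j k =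
     of_bool (a = i \<and> b = j \<and> d = k) * c - of_bool (a = j \<and> b = i \<and> d = k) * c + lie_sc l i j k"
proof -
  have "sum_list [c. (a, b, d, c) \<leftarrow> (a, b, d, c) # l, P a b d] =
      of_bool (P a b d) * c + sum_list [c. (a, b, d, c) \<leftarrow> l, P a b d]"
    for P :: "idx \<Rightarrow> idx \<Rightarrow> idx \<Rightarrow> bool"
    by simp
  from this[of "\<lambda>a b d. a = i \<and> b = j \<and> d = k"] this[of "\<lambda>a b d. a = j \<and> b = i \<and> d = k"]
  show ?thesis
    unfolding lie_sc_def by (simp add: algebra_simps)
qed

definition vec3 :: "'a \<Rightarrow> 'a \<Rightarrow> 'a \<Rightarrow> 'a^idx" where
  "vec3 a b c = (\<chi> i. case i of E1 \<Rightarrow> a | E2 \<Rightarrow> b | E3 \<Rightarrow> c)"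

lemma vec3_nth [simp]: "vec3 a b c $ E1 = a" "vec3 a b c $ E2 = b" "vec3 a b c $ E3 = c"
  by (simp_all add: vec3_def)

lemmas degeneration_simps = vec_eq_iff fun_eq_iff all_idx matrix_matrix_mult_def mat_def UNIV_idx rebase_eq
  comm_sc_Nil comm_sc_Cons lie_sc_Nil lie_sc_Cons

lemma P3_4_family_degenerates_to_P3_3:
  "zariski_closure (orbit P3_3) \<subseteq> zariski_closure (\<Union>\<alpha>. orbit (P3_4 \<alpha>))"
  by (rule zariski_closure_orbit_subset_family[where
        G = "\<lambda>t. vec3 (vec3 1 0 0) (vec3 0 (-1/t) (1/t)) (vec3 0 1 0)" and
        H = "\<lambda>t. vec3 (vec3 1 0 0) (vec3 0 0 1) (vec3 0 t 1)" and \<alpha> = "\<lambda>t. 1 + t" and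
        q = "\<lambda>t. (comm_sc [], lie_sc [(E1,E2,E2,1+t), (E1,E3,E2,1), (E1,E3,E3,1)])"])
     (simp_all add: degeneration_simps P3_4_def P3_3_def field_simps continuous_intros)

lemma P3_4_family_degenerates_to_P3_2:
  "zariski_closure (orbit P3_2) \<subseteq> zariski_closure (\<Union>\<alpha>. orbit (P3_4 \<alpha>))"
  by (rule zariski_closure_orbit_subset_family[where
        G = "\<lambda>t. vec3 (vec3 (1/t) 0 0) (vec3 0 0 1) (vec3 0 (1/t) (-1/t))" and
        H = "\<lambda>t. vec3 (vec3 t 0 0) (vec3 0 1 t) (vec3 0 1 0)" and \<alpha> = "\<lambda>t. 0" and
        q = "\<lambda>t. (comm_sc [], lie_sc [(E1,E2,E3,1), (E1,E3,E3,t)])"])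
     (simp_all add: degeneration_simps P3_4_def P3_2_def field_simps continuous_intros)

lemma P3_16_family_degenerates_to_P3_15:
  "zariski_closure (orbit P3_15) \<subseteq> zariski_closure (\<Union>\<alpha>. orbit (P3_16 \<alpha>))"
  by (rule zariski_closure_orbit_subset_family[where
        G = "\<lambda>t. vec3 (vec3 (1/2) (1/2) 0) (vec3 0 0 (1/2)) (vec3 (-1/(2*t)) (1/(2*t)) 0)" and
        H = "\<lambda>t. vec3 (vec3 1 0 (-t)) (vec3 1 0 t) (vec3 0 2 0)" and \<alpha> = "\<lambda>t. 1/t" and
        q = "\<lambda>t. (comm_sc [(E1,E1,E2,1), (E3,E3,E2,-(t*t))], lie_sc [(E1,E3,E2,1)])"])
     (simp_all add: degeneration_simps P3_16_def P3_15_def field_simps continuous_intros)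

lemma P3_16_family_degenerates_to_P3_13:
  "zariski_closure (orbit P3_13) \<subseteq> zariski_closure (\<Union>\<alpha>. orbit (P3_16 \<alpha>))"
  by (rule zariski_closure_orbit_subset_family[where
        G = "\<lambda>t. vec3 (vec3 (1/2) (1/2) 0) (vec3 0 0 (1/2)) (vec3 (-1/(2*t)) (1/(2*t)) 0)" and
        H = "\<lambda>t. vec3 (vec3 1 0 (-t)) (vec3 1 0 t) (vec3 0 2 0)" and \<alpha> = "\<lambda>t. 0" and
        q = "\<lambda>t. (comm_sc [(E1,E1,E2,1), (E3,E3,E2,-(t*t))], lie_sc [])"])
     (simp_all add: degeneration_simps P3_16_def P3_13_def field_simps continuous_intros)

lemma P3_16_family_degenerates_to_P3_2:
  "zariski_closure (orbit P3_2) \<subseteq> zariski_closure (\<Union>\<alpha>. orbit (P3_16 \<alpha>))"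
  by (rule zariski_closure_orbit_subset_family[where
        G = "\<lambda>t. vec3 (vec3 1 0 0) (vec3 0 1 0) (vec3 0 0 t)" and
        H = "\<lambda>t. vec3 (vec3 1 0 0) (vec3 0 1 0) (vec3 0 0 (1/t))" and \<alpha> = "\<lambda>t. 1/t" and
        q = "\<lambda>t. (comm_sc [(E1,E2,E3,t)], lie_sc [(E1,E2,E3,1)])"])
     (simp_all add: degeneration_simps P3_16_def P3_2_def field_simps continuous_intros)

theorem lemma4p9:
  shows "zariski_closure (orbit P3_3) \<subseteq> zariski_closure (\<Union>\<alpha>. orbit (P3_4 \<alpha>))
       \<and> zariski_closure (orbit P3_2) \<subseteq> zariski_closure (\<Union>\<alpha>. orbit (P3_4 \<alpha>))
       \<and> zariski_closure (orbit P3_1) \<subseteq> zariski_closure (\<Union>\<alpha>. orbit (P3_4 \<alpha>))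
       \<and> zariski_closure (orbit P3_15) \<subseteq> zariski_closure (\<Union>\<alpha>. orbit (P3_16 \<alpha>))
       \<and> zariski_closure (orbit P3_13) \<subseteq> zariski_closure (\<Union>\<alpha>. orbit (P3_16 \<alpha>))
       \<and> zariski_closure (orbit P3_2) \<subseteq> zariski_closure (\<Union>\<alpha>. orbit (P3_16 \<alpha>))
       \<and> zariski_closure (orbit P3_1) \<subseteq> zariski_closure (\<Union>\<alpha>. orbit (P3_16 \<alpha>))"
proof -
  have zero: "zariski_closure (orbit P3_1) \<subseteq> zariski_closure (\<Union>\<alpha>. orbit (Q \<alpha>))"
    for Q :: "complex \<Rightarrow> spair"
    using zariski_closure_orbit_zero[of "Q 0"] zariski_closure_mono[of "orbit (Q 0)" "\<Union>\<alpha>. orbit (Q \<alpha>)"]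
    by blast
  show ?thesis
    using P3_4_family_degenerates_to_P3_3 P3_4_family_degenerates_to_P3_2 zero[of P3_4]
      P3_16_family_degenerates_to_P3_15 P3_16_family_degenerates_to_P3_13
      P3_16_family_degenerates_to_P3_2 zero[of P3_16]
    by blast
qed

end
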